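(* For every positively weighted finite graph $(G,w)$, every vertex $v$ of $G$ and every natural number $r\ge 1$, $$\lambda_1(G(v,r),w)\ge \lambda_1(\widetilde{G}(v,r),w).$$
   Context: A weighted graph $(G,w)$ is a simple graph with $w\colon E(G)\to\mathbb{R}^+$; subgraphs inherit the restricted weight. The ball $G(v,r)$ is the subgraph of $G$ induced on the vertices at distance at most $r$ from $v$. A non-backtracking walk is a walk $(v_0,v_1,\dots)$ with $v_i\ne v_{i+2}$ for all $i$. The unraveled ball $\widetilde{G}(v,r)$ is the graph whose vertices are the non-backtracking walks in $G$ of length at most $r$ starting at $v$, two walks adjacent iff one is a one-step extension of the other, with the edge between $(v_0,\dots,v_{i-1})$ and $(v_0,\dots,v_i)$ weighted $w(v_{i-1}v_i)$. $\lambda_1(H,w)$ denotes the spectral radius of the weighted adjacency matrix of $(H,w)$ (entry $w(uv)$ if $uv$ is an edge, $0$ otherwise). *)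

theory Defs
  imports Complex_Main
begin

definition weighted_graph :: "'v set \<Rightarrow> 'v set set \<Rightarrow> ('v set \<Rightarrow> real) \<Rightarrow> bool" where
  "weighted_graph V E w \<longleftrightarrow>
     (\<forall>e\<in>E. \<exists>x y. x \<in> V \<and> y \<in> V \<and> x \<noteq> y \<and> e = {x, y}) \<and> (\<forall>e\<in>E. w e > 0)"

definition wadj :: "'v set set \<Rightarrow> ('v set \<Rightarrow> real) \<Rightarrow> 'v \<Rightarrow> 'v \<Rightarrow> real" where
  "wadj E w u x = (if {u, x} \<in> E then w {u, x} else 0)"

definition wadj_eigenvalue :: "'v set \<Rightarrow> 'v set set \<Rightarrow> ('v set \<Rightarrow> real) \<Rightarrow> complex \<Rightarrow> bool" where
  "wadj_eigenvalue V E w \<mu> \<longleftrightarrow>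
     (\<exists>f :: 'v \<Rightarrow> complex. (\<exists>x\<in>V. f x \<noteq> 0) \<and>
        (\<forall>u\<in>V. (\<Sum>x\<in>V. complex_of_real (wadj E w u x) * f x) = \<mu> * f u))"

definition lambda1 :: "'v set \<Rightarrow> 'v set set \<Rightarrow> ('v set \<Rightarrow> real) \<Rightarrow> real" where
  "lambda1 V E w = Sup (cmod ` {\<mu>. wadj_eigenvalue V E w \<mu>})"

text \<open>Walks as nonempty vertex lists; a walk of length k has k+1 entries.\<close>
definition is_walk :: "'v set set \<Rightarrow> 'v list \<Rightarrow> bool" where
  "is_walk E xs \<longleftrightarrow> xs \<noteq> [] \<and> (\<forall>i. Suc i < length xs \<longrightarrow> {xs ! i, xs ! Suc i} \<in> E)"

definition is_nb_walk :: "'v set set \<Rightarrow> 'v list \<Rightarrow> bool" where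
  "is_nb_walk E xs \<longleftrightarrow> is_walk E xs \<and> (\<forall>i. i + 2 < length xs \<longrightarrow> xs ! i \<noteq> xs ! (i + 2))"

definition ball_V :: "'v set \<Rightarrow> 'v set set \<Rightarrow> 'v \<Rightarrow> nat \<Rightarrow> 'v set" where
  "ball_V V E v r = {u \<in> V. \<exists>xs. is_walk E xs \<and> hd xs = v \<and> last xs = u \<and> length xs \<le> r + 1}"

definition ball_E :: "'v set \<Rightarrow> 'v set set \<Rightarrow> 'v \<Rightarrow> nat \<Rightarrow> 'v set set" where
  "ball_E V E v r = {e \<in> E. e \<subseteq> ball_V V E v r}"

text \<open>Unraveled ball: vertices are non-backtracking walks from v of length at most r;
  edges join a walk to its one-step extensions; the edge {p, p@[x]} gets weight
  w {last p, x} = w (last ` {p, p@[x]}).\<close>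
definition unrav_V :: "'v set set \<Rightarrow> 'v \<Rightarrow> nat \<Rightarrow> 'v list set" where
  "unrav_V E v r = {xs. is_nb_walk E xs \<and> hd xs = v \<and> length xs \<le> r + 1}"

definition unrav_E :: "'v set set \<Rightarrow> 'v \<Rightarrow> nat \<Rightarrow> 'v list set set" where
  "unrav_E E v r = {{p, p @ [x]} | p x. p \<in> unrav_V E v r \<and> p @ [x] \<in> unrav_V E v r}"

definition unrav_w :: "('v set \<Rightarrow> real) \<Rightarrow> 'v list set \<Rightarrow> real" where
  "unrav_w w e = w (last ` e)"

end

(* For a symmetric matrix A with nonnegative entries, lambda_1 is the maximum of the quadratic form
   <A z, z> over unit vectors z: a maximiser is an eigenvector, and the triangle inequality bounds
   every |mu| by the maximum. Let x be a unit maximiser for the unraveled ball and push |x| down along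
   p |-> last p, putting G u = sqrt (sum of (x p)^2 over the walks p ending at u). This map preserves
   edge weights and, because the walks do not backtrack, it is injective on the neighbours of each
   walk; so between two fibres the unraveled edges form a partial matching, and Cauchy-Schwarz gives
   <A_T |x|, |x|> <= <A_B G, G>, while ||G|| = ||x|| = 1. *)

theory Submission
  imports Defs "HOL-Analysis.Analysis"
begin

definition quad_form :: "'a set \<Rightarrow> ('a \<Rightarrow> 'a \<Rightarrow> real) \<Rightarrow> ('a \<Rightarrow> real) \<Rightarrow> real" where
  "quad_form V a z = (\<Sum>u\<in>V. \<Sum>k\<in>V. a u k * z u * z k)"

lemma quad_form_eq_sum_mult:
  "quad_form V a z = (\<Sum>u\<in>V. z u * (\<Sum>k\<in>V. a u k * z k))"
  by (simp add: quad_form_def sum_distrib_left algebra_simps)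

lemma quad_form_add_scaled:
  assumes sym: "\<And>u k. a u k = a k u"
  shows "quad_form V a (\<lambda>u. x u + t * y u) =
    quad_form V a x + 2 * t * (\<Sum>u\<in>V. y u * (\<Sum>k\<in>V. a u k * x k)) + t\<^sup>2 * quad_form V a y"
proof -
  have swap: "(\<Sum>u\<in>V. \<Sum>k\<in>V. a u k * x u * y k) = (\<Sum>u\<in>V. \<Sum>k\<in>V. a u k * y u * x k)"
    by (subst sum.swap) (simp add: sym mult.commute mult.left_commute)
  have "quad_form V a (\<lambda>u. x u + t * y u) = quad_form V a x
     + t * (\<Sum>u\<in>V. \<Sum>k\<in>V. a u k * x u * y k) + t * (\<Sum>u\<in>V. \<Sum>k\<in>V. a u k * y u * x k)
     + t\<^sup>2 * quad_form V a y"
    by (simp add: quad_form_def sum.distrib sum_distrib_left algebra_simps power2_eq_square)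
  also have "\<dots> = quad_form V a x + 2 * t * (\<Sum>u\<in>V. \<Sum>k\<in>V. a u k * y u * x k)
     + t\<^sup>2 * quad_form V a y"
    using swap by simp
  finally show ?thesis
    by (simp add: sum_distrib_left mult.commute mult.left_commute)
qed

lemma linear_le_quadratic_imp_zero:
  fixes c d :: real
  assumes le: "\<And>t. t * c \<le> t\<^sup>2 * d"
  shows "c = 0"
proof (rule ccontr)
  assume "c \<noteq> 0"
  have "d \<ge> 0"
    using le[of 1] le[of "-1"] by simp
  define s where "s = 2 * d + 1"
  have s: "s > 0" "d / s < 1"
    using \<open>d \<ge> 0\<close> by (simp_all add: s_def)
  have "(c / s)\<^sup>2 * d = (c\<^sup>2 / s) * (d / s)"
    by (simp add: power2_eq_square)
  also have "\<dots> < c\<^sup>2 / s"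
    using mult_strict_left_mono[OF s(2), of "c\<^sup>2 / s"] s \<open>c \<noteq> 0\<close> by simp
  also have "\<dots> = (c / s) * c"
    by (simp add: power2_eq_square)
  finally show False
    using le[of "c / s"] by simp
qed

lemma psd_quad_form_zero_imp_kernel:
  assumes fin: "finite V" and sym: "\<And>u k. b u k = b k u"
    and psd: "\<And>z. quad_form V b z \<ge> 0" and zero: "quad_form V b x = 0" and u: "u \<in> V"
  shows "(\<Sum>k\<in>V. b u k * x k) = 0"
proof -
  define y where "y u = (\<Sum>k\<in>V. b u k * x k)" for u
  have "t * (2 * (\<Sum>u\<in>V. (y u)\<^sup>2)) \<le> t\<^sup>2 * quad_form V b y" for t
  proof -
    have "0 \<le> quad_form V b (\<lambda>u. x u + (- t) * y u)"
      by (rule psd)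
    also have "\<dots> = - 2 * t * (\<Sum>u\<in>V. (y u)\<^sup>2) + t\<^sup>2 * quad_form V b y"
      unfolding quad_form_add_scaled[OF sym] zero by (simp add: y_def[symmetric] power2_eq_square)
    finally show ?thesis
      by simp
  qed
  then have "2 * (\<Sum>u\<in>V. (y u)\<^sup>2) = 0"
    by (rule linear_le_quadratic_imp_zero)
  then show ?thesis
    using fin u by (simp add: y_def sum_nonneg_eq_0_iff)
qed

lemma compact_unit_sphere_on:
  assumes "finite V"
  shows "compact {z :: 'a \<Rightarrow> real. (\<forall>u. u \<notin> V \<longrightarrow> z u = 0) \<and> (\<Sum>u\<in>V. (z u)\<^sup>2) = 1}"
    (is "compact ?S")
proof -
  define K where "K = Pi\<^sub>E UNIV (\<lambda>u. if u \<in> V then {-1..1} else {0::real})"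
  have "compactin (product_topology (\<lambda>_. euclidean) UNIV) K"
    unfolding K_def by (subst compactin_PiE) auto
  then have "compact K"
    by (simp add: euclidean_product_topology)
  moreover have "closed {z :: 'a \<Rightarrow> real. (\<Sum>u\<in>V. (z u)\<^sup>2) = 1}"
    by (intro closed_Collect_eq continuous_intros continuous_on_product_coordinates)
  moreover have "?S = K \<inter> {z. (\<Sum>u\<in>V. (z u)\<^sup>2) = 1}"
  proof -
    have "\<bar>z u\<bar> \<le> 1" if "(\<Sum>u\<in>V. (z u)\<^sup>2) = 1" "u \<in> V" for z :: "'a \<Rightarrow> real" and u
    proof -
      have "(z u)\<^sup>2 \<le> (\<Sum>u\<in>V. (z u)\<^sup>2)"
        using member_le_sum[of u V "\<lambda>u. (z u)\<^sup>2"] that assms by simp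
      then show ?thesis
        using that(1) by (simp add: abs_square_le_1)
    qed
    then show ?thesis
      by (auto simp: K_def PiE_iff abs_le_iff split: if_splits)
  qed
  ultimately show ?thesis
    by (simp add: compact_Int_closed)
qed

lemma quad_form_attains_max:
  assumes fin: "finite V" and ne: "V \<noteq> {}"
  shows "\<exists>x. (\<Sum>u\<in>V. (x u)\<^sup>2) = 1 \<and> (\<forall>z. quad_form V a z \<le> quad_form V a x * (\<Sum>u\<in>V. (z u)\<^sup>2))"
proof -
  define S where "S = {z :: 'a \<Rightarrow> real. (\<forall>u. u \<notin> V \<longrightarrow> z u = 0) \<and> (\<Sum>u\<in>V. (z u)\<^sup>2) = 1}"
  obtain u0 where "u0 \<in> V"
    using ne by auto
  then have "(\<lambda>u. if u = u0 then 1 else 0) \<in> S"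
    using fin by (simp add: S_def if_distrib[of "\<lambda>x. x\<^sup>2"] cong: if_cong)
  moreover have "continuous_on S (quad_form V a)"
    unfolding quad_form_def
    by (intro continuous_intros continuous_on_subset[OF continuous_on_product_coordinates subset_UNIV])
  ultimately have "\<exists>x\<in>S. \<forall>y\<in>S. quad_form V a y \<le> quad_form V a x"
    using compact_unit_sphere_on[OF fin, folded S_def] by (intro continuous_attains_sup) auto
  then obtain x where "x \<in> S" and max: "\<And>y. y \<in> S \<Longrightarrow> quad_form V a y \<le> quad_form V a x"
    by blast
  have "quad_form V a z \<le> quad_form V a x * (\<Sum>u\<in>V. (z u)\<^sup>2)" for z
  proof (cases "\<forall>u\<in>V. z u = 0")
    case True
    then show ?thesis
      by (simp add: quad_form_def)
  next
    case False
    define n where "n = (\<Sum>u\<in>V. (z u)\<^sup>2)"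
    obtain u where "u \<in> V" "z u \<noteq> 0"
      using False by blast
    then have "n > 0"
      unfolding n_def using fin by (intro sum_pos2) auto
    define y where "y u = (if u \<in> V then z u / sqrt n else 0)" for u
    have "y \<in> S"
      using \<open>n > 0\<close> by (simp add: S_def y_def power_divide sum_divide_distrib[symmetric] n_def)
    moreover have "quad_form V a y = quad_form V a z / n"
      using \<open>n > 0\<close> by (simp add: quad_form_def y_def sum_divide_distrib real_sqrt_mult[symmetric])
    ultimately have "quad_form V a z / n \<le> quad_form V a x"
      using max by metis
    then have "quad_form V a z \<le> quad_form V a x * n"
      by (simp add: pos_divide_le_eq[OF \<open>n > 0\<close>])
    then show ?thesis
      by (simp add: n_def)
  qed
  then show ?thesis
    using \<open>x \<in> S\<close> by (auto simp: S_def)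
qed

lemma quad_form_max_imp_eigenvector:
  assumes fin: "finite V" and sym: "\<And>u k. a u k = a k u"
    and bound: "\<And>z. quad_form V a z \<le> M * (\<Sum>u\<in>V. (z u)\<^sup>2)"
    and attained: "quad_form V a x = M * (\<Sum>u\<in>V. (x u)\<^sup>2)" and u: "u \<in> V"
  shows "(\<Sum>k\<in>V. a u k * x k) = M * x u"
proof -
  \<comment> \<open>\<open>M I - A\<close> is positive semidefinite and vanishes at \<open>x\<close>, so \<open>x\<close> lies in its kernel.\<close>
  define b where "b u k = (if u = k then M else 0) - a u k" for u k
  have row_b: "(\<Sum>k\<in>V. b u k * z k) = M * z u - (\<Sum>k\<in>V. a u k * z k)" if "u \<in> V" for u z
  proof -
    have "(\<Sum>k\<in>V. b u k * z k) = (\<Sum>k\<in>V. (if u = k then M * z k else 0) - a u k * z k)"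
      by (rule sum.cong) (simp_all add: b_def left_diff_distrib)
    then show ?thesis
      using fin that by (simp add: sum_subtractf)
  qed
  have quad_b: "quad_form V b z = M * (\<Sum>u\<in>V. (z u)\<^sup>2) - quad_form V a z" for z
    by (simp add: quad_form_eq_sum_mult row_b right_diff_distrib sum_subtractf
        sum_distrib_left power2_eq_square mult.left_commute cong: sum.cong)
  have "(\<Sum>k\<in>V. b u k * x k) = 0"
  proof (rule psd_quad_form_zero_imp_kernel[OF fin _ _ _ u])
    show "b u k = b k u" for u k
      by (simp add: b_def sym)
    show "quad_form V b z \<ge> 0" for z
      using bound[of z] by (simp add: quad_b)
    show "quad_form V b x = 0"
      by (simp add: quad_b attained)
  qed
  then show ?thesis
    by (simp add: row_b[OF u])
qed

lemma eigenvalue_norm_le_quad_form: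
  fixes f :: "'a \<Rightarrow> complex"
  assumes nonneg: "\<And>u k. a u k \<ge> 0"
    and eigen: "\<And>u. u \<in> V \<Longrightarrow> (\<Sum>k\<in>V. complex_of_real (a u k) * f k) = \<mu> * f u"
  shows "cmod \<mu> * (\<Sum>u\<in>V. (cmod (f u))\<^sup>2) \<le> quad_form V a (\<lambda>u. cmod (f u))"
proof -
  have row: "cmod \<mu> * cmod (f u) \<le> (\<Sum>k\<in>V. a u k * cmod (f k))" if "u \<in> V" for u
  proof -
    have "cmod \<mu> * cmod (f u) = cmod (\<Sum>k\<in>V. complex_of_real (a u k) * f k)"
      using eigen[OF that] by (simp add: norm_mult)
    also have "\<dots> \<le> (\<Sum>k\<in>V. cmod (complex_of_real (a u k) * f k))"
      by (rule norm_sum)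
    also have "\<dots> = (\<Sum>k\<in>V. a u k * cmod (f k))"
      using nonneg by (simp add: norm_mult)
    finally show ?thesis .
  qed
  have "cmod \<mu> * (\<Sum>u\<in>V. (cmod (f u))\<^sup>2) = (\<Sum>u\<in>V. cmod (f u) * (cmod \<mu> * cmod (f u)))"
    by (simp add: sum_distrib_left power2_eq_square algebra_simps)
  also have "\<dots> \<le> (\<Sum>u\<in>V. cmod (f u) * (\<Sum>k\<in>V. a u k * cmod (f k)))"
    by (intro sum_mono mult_left_mono row) simp_all
  finally show ?thesis
    by (simp add: quad_form_eq_sum_mult)
qed

lemma wadj_sym: "wadj E w u k = wadj E w k u"
  by (simp add: wadj_def insert_commute)

lemma wadj_nonneg: "\<forall>e\<in>E. w e \<ge> 0 \<Longrightarrow> wadj E w u k \<ge> 0"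
  by (simp add: wadj_def)

lemma wadj_eigenvalue_norm_le:
  assumes fin: "finite V" and nonneg: "\<forall>e\<in>E. w e \<ge> 0"
    and bound: "\<And>z. quad_form V (wadj E w) z \<le> M * (\<Sum>u\<in>V. (z u)\<^sup>2)"
    and "wadj_eigenvalue V E w \<mu>"
  shows "cmod \<mu> \<le> M"
proof -
  obtain f where "\<exists>u\<in>V. f u \<noteq> 0"
    and eigen: "\<And>u. u \<in> V \<Longrightarrow> (\<Sum>k\<in>V. complex_of_real (wadj E w u k) * f k) = \<mu> * f u"
    using assms(4) unfolding wadj_eigenvalue_def by blast
  then obtain u where "u \<in> V" "f u \<noteq> 0"
    by blast
  then have pos: "(\<Sum>u\<in>V. (cmod (f u))\<^sup>2) > 0"
    using fin by (intro sum_pos2) auto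
  have "cmod \<mu> * (\<Sum>u\<in>V. (cmod (f u))\<^sup>2) \<le> quad_form V (wadj E w) (\<lambda>u. cmod (f u))"
    using eigenvalue_norm_le_quad_form[OF wadj_nonneg[OF nonneg] eigen] .
  also have "\<dots> \<le> M * (\<Sum>u\<in>V. (cmod (f u))\<^sup>2)"
    by (rule bound)
  finally show ?thesis
    using pos by (rule mult_right_le_imp_le)
qed

lemma lambda1_variational:
  assumes fin: "finite V" and ne: "V \<noteq> {}" and nonneg: "\<forall>e\<in>E. w e \<ge> 0"
  shows "\<exists>x. (\<Sum>u\<in>V. (x u)\<^sup>2) = 1 \<and> quad_form V (wadj E w) x = lambda1 V E w \<and>
           (\<forall>z. quad_form V (wadj E w) z \<le> lambda1 V E w * (\<Sum>u\<in>V. (z u)\<^sup>2))"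
proof -
  obtain x where unit: "(\<Sum>u\<in>V. (x u)\<^sup>2) = 1"
    and bound: "\<And>z. quad_form V (wadj E w) z \<le> quad_form V (wadj E w) x * (\<Sum>u\<in>V. (z u)\<^sup>2)"
    using quad_form_attains_max[OF fin ne] by blast
  define M where "M = quad_form V (wadj E w) x"
  have eigenvector: "(\<Sum>k\<in>V. wadj E w u k * x k) = M * x u" if "u \<in> V" for u
    using quad_form_max_imp_eigenvector[OF fin wadj_sym bound _ that] unit by (simp add: M_def)
  have "\<exists>u\<in>V. x u \<noteq> 0"
    using unit by (metis (mono_tags, lifting) power_zero_numeral sum.neutral zero_neq_one)
  then have "wadj_eigenvalue V E w (complex_of_real M)"
    unfolding wadj_eigenvalue_def using eigenvector
    by (intro exI[of _ "\<lambda>u. complex_of_real (x u)"]) (simp flip: of_real_mult of_real_sum)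
  moreover have le: "cmod \<mu> \<le> M" if "wadj_eigenvalue V E w \<mu>" for \<mu>
    using wadj_eigenvalue_norm_le[OF fin nonneg _ that] bound by (simp add: M_def)
  ultimately have "M \<ge> 0"
    by force
  have "lambda1 V E w = M"
    unfolding lambda1_def
  proof (rule cSup_eq_maximum)
    show "M \<in> cmod ` {\<mu>. wadj_eigenvalue V E w \<mu>}"
      using \<open>wadj_eigenvalue V E w (complex_of_real M)\<close> \<open>M \<ge> 0\<close> by force
  qed (use le in blast)
  then show ?thesis
    using unit bound by (auto simp: M_def)
qed

lemma quad_form_le_abs:
  assumes "\<And>u k. a u k \<ge> 0"
  shows "quad_form V a x \<le> quad_form V a (\<lambda>u. \<bar>x u\<bar>)"
  unfolding quad_form_def
proof (intro sum_mono)
  fix u k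
  have "a u k * x u * x k \<le> \<bar>a u k * x u * x k\<bar>"
    by (rule abs_ge_self)
  then show "a u k * x u * x k \<le> a u k * \<bar>x u\<bar> * \<bar>x k\<bar>"
    using assms by (simp add: abs_mult)
qed

lemma L2_set_mono_set:
  assumes "finite B" "A \<subseteq> B"
  shows "L2_set h A \<le> L2_set h B"
  unfolding L2_set_def using assms by (intro real_sqrt_le_mono sum_mono2) auto

lemma sum_matching_le_L2_set:
  fixes h :: "'a \<Rightarrow> real"
  assumes fin: "finite A" "finite B" and M: "M \<subseteq> A \<times> B" and inj: "inj_on fst M" "inj_on snd M"
  shows "(\<Sum>(p, q)\<in>M. h p * h q) \<le> L2_set h A * L2_set h B"
proof -
  have "(\<Sum>(p, q)\<in>M. h p * h q) \<le> (\<Sum>s\<in>M. \<bar>(h \<circ> fst) s\<bar> * \<bar>(h \<circ> snd) s\<bar>)"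
    by (intro sum_mono) (auto simp flip: abs_mult)
  also have "\<dots> \<le> L2_set (h \<circ> fst) M * L2_set (h \<circ> snd) M"
    by (rule L2_set_mult_ineq)
  also have "\<dots> = L2_set h (fst ` M) * L2_set h (snd ` M)"
    by (simp add: L2_set_def sum.reindex inj)
  also have "\<dots> \<le> L2_set h A * L2_set h B"
    using M fin by (intro mult_mono L2_set_mono_set) auto
  finally show ?thesis .
qed

lemma sum_sq_L2_set_fibres:
  assumes "finite T" "finite B" "\<pi> ` T \<subseteq> B"
  shows "(\<Sum>u\<in>B. (L2_set h {p \<in> T. \<pi> p = u})\<^sup>2) = (\<Sum>p\<in>T. (h p)\<^sup>2)"
  using assms by (simp add: L2_set_def sum_nonneg sum.group)

lemma quad_form_le_fibre_L2_set:
  fixes \<pi> :: "'a \<Rightarrow> 'b" and h :: "'a \<Rightarrow> real"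
  assumes finT: "finite T" and finB: "finite B" and maps: "\<pi> ` T \<subseteq> B"
    and nonneg: "\<And>u y. b u y \<ge> 0"
    and lift: "\<And>p q. p \<in> T \<Longrightarrow> q \<in> T \<Longrightarrow> a p q = (if R p q then b (\<pi> p) (\<pi> q) else 0)"
    and sym: "\<And>p q. R p q \<Longrightarrow> R q p"
    and locally_inj: "\<And>p q q'. p \<in> T \<Longrightarrow> q \<in> T \<Longrightarrow> q' \<in> T \<Longrightarrow> R p q \<Longrightarrow> R p q' \<Longrightarrow>
      \<pi> q = \<pi> q' \<Longrightarrow> q = q'"
  shows "quad_form T a h \<le> quad_form B b (\<lambda>u. L2_set h {p \<in> T. \<pi> p = u})"
proof -
  define F where "F u = {p \<in> T. \<pi> p = u}" for u
  have finF: "finite (F u)" for u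
    using finT by (simp add: F_def)
  \<comment> \<open>Between two fibres, \<open>R\<close> is a partial matching.\<close>
  have block: "(\<Sum>p\<in>F u. \<Sum>q\<in>F y. a p q * h p * h q) \<le> b u y * L2_set h (F u) * L2_set h (F y)"
    for u y
  proof -
    define M where "M = {(p, q) \<in> F u \<times> F y. R p q}"
    have "(\<Sum>p\<in>F u. \<Sum>q\<in>F y. a p q * h p * h q)
        = (\<Sum>(p, q)\<in>F u \<times> F y. if R p q then b u y * (h p * h q) else 0)"
      unfolding sum.cartesian_product by (rule sum.cong) (auto simp: F_def lift)
    also have "\<dots> = b u y * (\<Sum>(p, q)\<in>M. h p * h q)"
      using finF by (simp add: M_def sum.inter_filter[symmetric] case_prod_unfold
          sum_distrib_left if_distrib mem_Times_iff cong: if_cong)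
    also have "\<dots> \<le> b u y * (L2_set h (F u) * L2_set h (F y))"
    proof (intro mult_left_mono nonneg sum_matching_le_L2_set finF)
      show "M \<subseteq> F u \<times> F y"
        by (auto simp: M_def)
      show "inj_on fst M" "inj_on snd M"
        using locally_inj sym by (auto simp: M_def F_def inj_on_def)
    qed
    finally show ?thesis
      by (simp add: mult.assoc)
  qed
  have "quad_form T a h = (\<Sum>u\<in>B. \<Sum>p\<in>F u. \<Sum>y\<in>B. \<Sum>q\<in>F y. a p q * h p * h q)"
    using finT finB maps by (simp add: quad_form_def F_def sum.group)
  also have "\<dots> = (\<Sum>u\<in>B. \<Sum>y\<in>B. \<Sum>p\<in>F u. \<Sum>q\<in>F y. a p q * h p * h q)"
    by (simp add: sum.swap[of _ "F _" B])
  also have "\<dots> \<le> quad_form B b (\<lambda>u. L2_set h (F u))"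
    unfolding quad_form_def by (intro sum_mono block)
  finally show ?thesis
    by (simp add: F_def)
qed

lemma weighted_graph_edge_subset: "weighted_graph V E w \<Longrightarrow> e \<in> E \<Longrightarrow> e \<subseteq> V"
  unfolding weighted_graph_def by fastforce

lemma weighted_graph_weight_pos: "weighted_graph V E w \<Longrightarrow> e \<in> E \<Longrightarrow> w e > 0"
  unfolding weighted_graph_def by blast

lemma is_walk_snoc_edge:
  assumes "is_walk E (p @ [x])" "p \<noteq> []"
  shows "{last p, x} \<in> E"
proof -
  let ?i = "length p - 1"
  have "Suc ?i < length (p @ [x])"
    using assms(2) by simp
  then have "{(p @ [x]) ! ?i, (p @ [x]) ! Suc ?i} \<in> E"
    using assms(1) unfolding is_walk_def by blast
  moreover have "(p @ [x]) ! ?i = last p" "(p @ [x]) ! Suc ?i = x"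
    using assms(2) by (simp_all add: nth_append last_conv_nth)
  ultimately show ?thesis
    by simp
qed

lemma is_walk_set_subset:
  assumes "weighted_graph V E w" "is_walk E xs" "hd xs \<in> V"
  shows "set xs \<subseteq> V"
proof -
  have "xs ! i \<in> V" if "i < length xs" for i
    using that
  proof (induction i)
    case 0
    then show ?case
      using assms(2,3) by (simp add: hd_conv_nth is_walk_def)
  next
    case (Suc i)
    then have "{xs ! i, xs ! Suc i} \<in> E"
      using assms(2) by (simp add: is_walk_def)
    then show ?case
      using weighted_graph_edge_subset[OF assms(1)] by blast
  qed
  then show ?thesis
    by (auto simp: in_set_conv_nth)
qed

lemma is_nb_walk_no_return:
  assumes "is_nb_walk E (q @ [y, x])" "q \<noteq> []"
  shows "last q \<noteq> x"
proof -
  let ?i = "length q - 1"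
  have "?i + 2 < length (q @ [y, x])"
    using assms(2) by simp
  then have "(q @ [y, x]) ! ?i \<noteq> (q @ [y, x]) ! (?i + 2)"
    using assms(1) unfolding is_nb_walk_def by blast
  moreover have "(q @ [y, x]) ! ?i = last q" "(q @ [y, x]) ! (?i + 2) = x"
    using assms(2) by (simp_all add: nth_append last_conv_nth)
  ultimately show ?thesis
    by simp
qed

lemma unrav_V_not_Nil: "p \<in> unrav_V E v r \<Longrightarrow> p \<noteq> []"
  by (simp add: unrav_V_def is_nb_walk_def is_walk_def)

lemma unrav_E_cases:
  assumes "{p, q} \<in> unrav_E E v r"
  obtains x where "p \<in> unrav_V E v r" "q = p @ [x]" "q \<in> unrav_V E v r"
    | x where "q \<in> unrav_V E v r" "p = q @ [x]" "p \<in> unrav_V E v r"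
  using assms unfolding unrav_E_def by (auto simp: doubleton_eq_iff)

lemma unrav_E_last_edge:
  assumes "{p, q} \<in> unrav_E E v r"
  shows "{last p, last q} \<in> E"
  using assms
proof (cases rule: unrav_E_cases)
  case (1 x)
  then show ?thesis
    using is_walk_snoc_edge[of E p x] unrav_V_not_Nil[OF 1(1)]
    by (simp add: unrav_V_def is_nb_walk_def)
next
  case (2 x)
  then show ?thesis
    using is_walk_snoc_edge[of E q x] unrav_V_not_Nil[OF 2(1)]
    by (simp add: unrav_V_def is_nb_walk_def insert_commute)
qed

lemma unrav_E_last_unique:
  assumes "{p, q} \<in> unrav_E E v r" "{p, q'} \<in> unrav_E E v r" "last q = last q'"
  shows "q = q'"
proof -
  have no_return: "last q2 \<noteq> x1"
    if "p @ [x1] \<in> unrav_V E v r" "p = q2 @ [x2]" "q2 \<in> unrav_V E v r" for q2 x1 x2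
    using is_nb_walk_no_return[of E q2 x2 x1] unrav_V_not_Nil[OF that(3)] that(1,2)
    by (simp add: unrav_V_def)
  from assms(1) show ?thesis
  proof (cases rule: unrav_E_cases)
    case q: (1 x)
    from assms(2) show ?thesis
    proof (cases rule: unrav_E_cases)
      case (1 x')
      then show ?thesis
        using q assms(3) by simp
    next
      case (2 x')
      then show ?thesis
        using q assms(3) no_return[of x q' x'] by simp
    qed
  next
    case q: (2 x)
    from assms(2) show ?thesis
    proof (cases rule: unrav_E_cases)
      case (1 x')
      then show ?thesis
        using q assms(3) no_return[of x' q x] by simp
    next
      case (2 x')
      then show ?thesis
        using q by simp
    qed
  qed
qed

lemma unrav_w_nonneg:
  assumes "weighted_graph V E w"
  shows "\<forall>e\<in>unrav_E E v r. unrav_w w e \<ge> 0"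
proof
  fix e
  assume "e \<in> unrav_E E v r"
  then obtain p q where e: "e = {p, q}" and pq: "{p, q} \<in> unrav_E E v r"
    unfolding unrav_E_def by blast
  show "unrav_w w e \<ge> 0"
    using weighted_graph_weight_pos[OF assms unrav_E_last_edge[OF pq]] e
    by (simp add: unrav_w_def less_imp_le)
qed

lemma ball_E_weight_nonneg: "weighted_graph V E w \<Longrightarrow> \<forall>e\<in>ball_E V E v r. w e \<ge> 0"
  using weighted_graph_weight_pos by (fastforce simp: ball_E_def)

lemma finite_ball_V: "finite V \<Longrightarrow> finite (ball_V V E v r)"
  by (rule rev_finite_subset) (auto simp: ball_V_def)

lemma singleton_unrav_V: "[v] \<in> unrav_V E v r"
  by (simp add: unrav_V_def is_nb_walk_def is_walk_def)

lemma unrav_V_walk_in_ball: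
  assumes "weighted_graph V E w" "v \<in> V" "p \<in> unrav_V E v r"
  shows "set p \<subseteq> V" "length p \<le> r + 1" "last p \<in> ball_V V E v r"
proof -
  have p: "is_walk E p" "hd p = v" "length p \<le> r + 1" "p \<noteq> []"
    using assms(3) unrav_V_not_Nil[OF assms(3)] by (simp_all add: unrav_V_def is_nb_walk_def)
  then show "set p \<subseteq> V" "length p \<le> r + 1"
    using is_walk_set_subset[OF assms(1)] assms(2) by simp_all
  then show "last p \<in> ball_V V E v r"
    using p unfolding ball_V_def by auto
qed

lemma finite_unrav_V:
  assumes "finite V" "weighted_graph V E w" "v \<in> V"
  shows "finite (unrav_V E v r)"
  using unrav_V_walk_in_ball[OF assms(2,3)]
  by (intro finite_subset[OF _ finite_lists_length_le[OF assms(1), of "r + 1"]]) auto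

lemma wadj_unrav_eq_wadj_ball:
  assumes wg: "weighted_graph V E w" and "v \<in> V"
    and p: "p \<in> unrav_V E v r" and q: "q \<in> unrav_V E v r"
  shows "wadj (unrav_E E v r) (unrav_w w) p q =
    (if {p, q} \<in> unrav_E E v r then wadj (ball_E V E v r) w (last p) (last q) else 0)"
proof (cases "{p, q} \<in> unrav_E E v r")
  case True
  then have "{last p, last q} \<in> ball_E V E v r"
    using unrav_E_last_edge unrav_V_walk_in_ball(3)[OF wg \<open>v \<in> V\<close>] p q
    by (simp add: ball_E_def)
  with True show ?thesis
    by (simp add: wadj_def unrav_w_def)
qed (simp add: wadj_def)

lemma last_unrav_V_subset_ball_V:
  assumes "weighted_graph V E w" "v \<in> V"
  shows "last ` unrav_V E v r \<subseteq> ball_V V E v r"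
  using unrav_V_walk_in_ball(3)[OF assms] by blast

lemma quad_form_unrav_le_ball:
  assumes "finite V" "weighted_graph V E w" "v \<in> V"
  shows "quad_form (unrav_V E v r) (wadj (unrav_E E v r) (unrav_w w)) h
    \<le> quad_form (ball_V V E v r) (wadj (ball_E V E v r) w)
         (\<lambda>u. L2_set h {p \<in> unrav_V E v r. last p = u})"
proof (rule quad_form_le_fibre_L2_set[where \<pi> = last and R = "\<lambda>p q. {p, q} \<in> unrav_E E v r",
      OF finite_unrav_V[OF assms] finite_ball_V[OF assms(1)] last_unrav_V_subset_ball_V[OF assms(2,3)]
      wadj_nonneg[OF ball_E_weight_nonneg[OF assms(2)]] wadj_unrav_eq_wadj_ball[OF assms(2,3)]])
  show "{q, p} \<in> unrav_E E v r" if "{p, q} \<in> unrav_E E v r" for p q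
    using that by (simp add: insert_commute)
  show "q = q'" if "{p, q} \<in> unrav_E E v r" "{p, q'} \<in> unrav_E E v r" "last q = last q'" for p q q'
    using unrav_E_last_unique[OF that] .
qed

theorem lemma4p2:
  fixes V :: "'v set" and E :: "'v set set" and w :: "'v set \<Rightarrow> real"
    and v :: 'v and r :: nat
  assumes "finite V" and "weighted_graph V E w" and "v \<in> V" and "r \<ge> 1"
  shows "lambda1 (ball_V V E v r) (ball_E V E v r) w
           \<ge> lambda1 (unrav_V E v r) (unrav_E E v r) (unrav_w w)"
proof -
  let ?T = "unrav_V E v r" and ?B = "ball_V V E v r"
  have finT: "finite ?T"
    by (rule finite_unrav_V[OF assms(1-3)])
  have finB: "finite ?B"
    by (rule finite_ball_V[OF assms(1)])
  have last_T: "last ` ?T \<subseteq> ?B"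
    by (rule last_unrav_V_subset_ball_V[OF assms(2,3)])
  have v_T: "[v] \<in> ?T"
    by (rule singleton_unrav_V)
  then have nonempty: "?T \<noteq> {}" "?B \<noteq> {}"
    using subsetD[OF last_T imageI[OF v_T]] by blast+
  obtain x where unit: "(\<Sum>p\<in>?T. (x p)\<^sup>2) = 1"
    and x: "quad_form ?T (wadj (unrav_E E v r) (unrav_w w)) x = lambda1 ?T (unrav_E E v r) (unrav_w w)"
    using lambda1_variational[OF finT nonempty(1) unrav_w_nonneg[OF assms(2), of v r]] by blast
  have bound: "\<And>z. quad_form ?B (wadj (ball_E V E v r) w) z
      \<le> lambda1 ?B (ball_E V E v r) w * (\<Sum>u\<in>?B. (z u)\<^sup>2)"
    using lambda1_variational[OF finB nonempty(2) ball_E_weight_nonneg[OF assms(2), of v r]] by blast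
  define G where "G u = L2_set (\<lambda>p. \<bar>x p\<bar>) {p \<in> ?T. last p = u}" for u
  have "lambda1 ?T (unrav_E E v r) (unrav_w w) \<le> quad_form ?T (wadj (unrav_E E v r) (unrav_w w)) (\<lambda>p. \<bar>x p\<bar>)"
    unfolding x[symmetric] by (rule quad_form_le_abs[OF wadj_nonneg[OF unrav_w_nonneg[OF assms(2)]]])
  also have "\<dots> \<le> quad_form ?B (wadj (ball_E V E v r) w) G"
    unfolding G_def by (rule quad_form_unrav_le_ball[OF assms(1-3)])
  also have "\<dots> \<le> lambda1 ?B (ball_E V E v r) w"
    using bound[of G] sum_sq_L2_set_fibres[OF finT finB last_T] unit
    by (simp add: G_def)
  finally show ?thesis .
qed

end
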